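(* Let $\alpha>0$, $\Sigma_0$ a symmetric positive definite $d\times d$ matrix with symmetric positive definite square root $\Lambda_0=\Sigma_0^{1/2}$, and for symmetric positive definite $\Sigma$ define $\Psi(\Sigma)=\frac1{(1+\alpha)^{d/2}}|\Sigma|^{-\alpha/2}-\left(1+\frac1\alpha\right)|\Sigma|^{-\alpha/2}\left|I_d+\alpha\Lambda_0\Sigma^{-1}\Lambda_0\right|^{-1/2}$. Then $\Psi$ has a unique minimizer over the set of $d\times d$ symmetric positive definite matrices, namely $\Sigma^\star=\Lambda_0\Lambda_0=\Sigma_0$. *)

theory Defs
  imports "HOL-Analysis.Analysis"
begin

definition spd :: "real^'n^'n \<Rightarrow> bool" where
  "spd A \<longleftrightarrow> transpose A = A \<and> (\<forall>x. x \<noteq> 0 \<longrightarrow> x \<bullet> (A *v x) > 0)"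

definition Psi :: "real \<Rightarrow> real^'n^'n \<Rightarrow> real^'n^'n \<Rightarrow> real" where
  "Psi \<alpha> \<Lambda>0 \<Sigma> =
     (1 / (1 + \<alpha>) powr (real CARD('n) / 2)) * det \<Sigma> powr (- \<alpha> / 2)
     - (1 + 1 / \<alpha>) * det \<Sigma> powr (- \<alpha> / 2)
       * det (mat 1 + \<alpha> *\<^sub>R (\<Lambda>0 ** matrix_inv \<Sigma> ** \<Lambda>0)) powr (- 1 / 2)"

end

theory Submission
  imports Defs
begin

text \<open>
Put \<open>N = \<Lambda>0 \<Sigma>^-1 \<Lambda>0\<close>. It is again symmetric positive definite, it equals \<open>I\<close> exactly when
\<open>\<Sigma> = \<Lambda>0 \<Lambda>0\<close>, and \<open>|\<Sigma>| = |\<Sigma>0| / |N|\<close>; hence \<open>\<Psi>(\<Sigma>) = |\<Sigma>0|^(-\<alpha>/2) \<Phi>(N)\<close> with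
\<open>\<Phi>(N) = |N|^(\<alpha>/2) ((1+\<alpha>)^(-d/2) - (1 + 1/\<alpha>) |I + \<alpha>N|^(-1/2))\<close>.
With \<open>\<beta> = \<alpha>/(1+\<alpha>)\<close>, the weighted AM-GM inequality \<open>(1+\<alpha>) \<lambda>^\<beta> \<le> 1 + \<alpha>\<lambda>\<close>, strict for \<open>\<lambda> \<noteq> 1\<close>,
applied to the eigenvalues of \<open>N\<close> gives \<open>|I + \<alpha>N| \<ge> (1+\<alpha>)^d |N|^\<beta>\<close>, strictly unless \<open>N = I\<close>.
Writing \<open>p = |N|^(\<alpha>/2)\<close>, this yields \<open>\<Phi>(N) \<ge> (1+\<alpha>)^(-d/2) (p - (1 + 1/\<alpha>) p^\<beta>)\<close>, and the same
inequality applied to \<open>p\<close> bounds this from below by \<open>\<Phi>(I) = -(1+\<alpha>)^(-d/2) / \<alpha>\<close>.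
\<close>

section \<open>Spectral theorem for real symmetric matrices\<close>

lemma symmetric_matrix_inner_commute:
  fixes M :: "real^'n^'n"
  assumes "transpose M = M"
  shows "(M *v x) \<bullet> y = x \<bullet> (M *v y)"
  by (metis assms dot_lmul_matrix vector_transpose_matrix)

lemma quadratic_nonneg_imp_linear_coeff_zero:
  fixes a b :: real
  assumes "\<And>t. 0 \<le> a * t + b * t\<^sup>2"
  shows "a = 0"
proof (rule ccontr)
  assume "a \<noteq> 0"
  define c where "c = \<bar>b\<bar> + 1"
  have "c > 0" "b < c" by (auto simp: c_def)
  have "a * (- a / c) + b * (- a / c)\<^sup>2 = a\<^sup>2 * (b - c) / c\<^sup>2"
    using \<open>c > 0\<close> by (simp add: field_simps power2_eq_square)
  also have "\<dots> < 0"
    using \<open>a \<noteq> 0\<close> \<open>b < c\<close> \<open>c > 0\<close> by (simp add: divide_neg_pos mult_pos_neg)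
  finally show False using assms[of "- a / c"] by linarith
qed

lemma symmetric_matrix_maximizer_eigenvector:
  fixes M :: "real^'n^'n"
  assumes sym: "transpose M = M" and "subspace S" and inv: "\<And>x. x \<in> S \<Longrightarrow> M *v x \<in> S"
    and "v \<in> S" and bound: "\<And>u. u \<in> S \<Longrightarrow> u \<bullet> (M *v u) \<le> l * (u \<bullet> u)"
    and attained: "v \<bullet> (M *v v) = l * (v \<bullet> v)"
  shows "M *v v = l *\<^sub>R v"
proof -
  \<comment> \<open>\<open>v\<close> minimises the form \<open>l |u|^2 - u \<bullet> M u \<ge> 0\<close> on \<open>S\<close>, so its derivative at \<open>v\<close> vanishes\<close>
  have orth: "l * (w \<bullet> v) = w \<bullet> (M *v v)" if "w \<in> S" for w
  proof -
    have "0 \<le> 2 * (l * (w \<bullet> v) - w \<bullet> (M *v v)) * t + (l * (w \<bullet> w) - w \<bullet> (M *v w)) * t\<^sup>2" for t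
    proof -
      have "v + t *\<^sub>R w \<in> S" using \<open>subspace S\<close> \<open>v \<in> S\<close> \<open>w \<in> S\<close> by (simp add: subspace_add subspace_scale)
      from bound[OF this] show ?thesis
        using attained symmetric_matrix_inner_commute[OF sym, of v w]
        by (simp add: inner_commute power2_eq_square algebra_simps)
    qed
    then show ?thesis using quadratic_nonneg_imp_linear_coeff_zero by fastforce
  qed
  define w where "w = l *\<^sub>R v - M *v v"
  have "w \<in> S" unfolding w_def using assms(2-4) by (simp add: subspace_diff subspace_scale)
  then have "w \<bullet> (l *\<^sub>R v - M *v v) = 0" using orth by (simp add: inner_diff_right)
  then have "w \<bullet> w = 0" by (simp only: w_def[symmetric])
  then show ?thesis unfolding w_def by simp
qed

lemma symmetric_matrix_eigenvector_in_subspace: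
  fixes M :: "real^'n^'n"
  assumes sym: "transpose M = M" and "subspace S" and inv: "\<And>x. x \<in> S \<Longrightarrow> M *v x \<in> S"
    and "S \<noteq> {0}"
  obtains v l where "v \<in> S" "norm v = 1" "M *v v = l *\<^sub>R v"
proof -
  define f where "f u = u \<bullet> (M *v u)" for u
  have normalize: "u /\<^sub>R norm u \<in> sphere 0 1 \<inter> S" if "u \<in> S" "u \<noteq> 0" for u
    using that \<open>subspace S\<close> by (simp add: subspace_scale)
  obtain z where "z \<in> S" "z \<noteq> 0" using \<open>S \<noteq> {0}\<close> \<open>subspace S\<close> subspace_0 by blast
  moreover have "compact (sphere 0 1 \<inter> S)"
    using \<open>subspace S\<close> by (intro compact_Int_closed compact_sphere closed_subspace)
  moreover have "continuous_on (sphere 0 1 \<inter> S) f" unfolding f_def by (intro continuous_intros)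
  ultimately obtain v where v: "v \<in> sphere 0 1 \<inter> S" and max: "\<And>y. y \<in> sphere 0 1 \<inter> S \<Longrightarrow> f y \<le> f v"
    using continuous_attains_sup[of "sphere 0 1 \<inter> S" f] normalize by blast
  have "f u \<le> f v * (u \<bullet> u)" if "u \<in> S" for u
  proof (cases "u = 0")
    case False
    have "f u = (norm u)\<^sup>2 * f (u /\<^sub>R norm u)"
      using False by (simp add: f_def matrix_vector_mult_scaleR field_simps power2_eq_square)
    also have "\<dots> \<le> (norm u)\<^sup>2 * f v" using max[OF normalize[OF that False]] by (simp add: mult_left_mono)
    finally show ?thesis by (simp add: power2_norm_eq_inner mult.commute)
  qed (simp add: f_def)
  moreover have "f v = f v * (v \<bullet> v)" using v by (simp add: norm_eq_1)
  ultimately have "M *v v = f v *\<^sub>R v"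
    using symmetric_matrix_maximizer_eigenvector[OF sym \<open>subspace S\<close> inv] v unfolding f_def by blast
  with v show thesis by (auto intro: that)
qed

lemma orthogonal_slice_of_subspace:
  fixes v :: "'a::euclidean_space"
  assumes "subspace S" "v \<in> S" "v \<noteq> 0"
  defines "S' \<equiv> {x \<in> S. orthogonal x v}"
  shows "subspace S'" and "dim S' < dim S" and "span (insert v S') = S"
proof -
  show "subspace S'"
    using assms(1) by (auto simp: S'_def subspace_def orthogonal_clauses)
  have "v \<notin> S'" using assms(3) by (simp add: S'_def orthogonal_def)
  then have "S' \<subset> S" using assms(2) by (auto simp: S'_def)
  then show "dim S' < dim S"
    using \<open>subspace S'\<close> assms(1) by (intro dim_psubset) (simp add: span_eq_iff[THEN iffD2])
  have "x \<in> span (insert v S')" if "x \<in> S" for x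
  proof -
    have "x - (x \<bullet> v / (v \<bullet> v)) *\<^sub>R v \<in> S'"
      using that assms(1-3) by (simp add: S'_def subspace_diff subspace_scale orthogonal_def
          inner_diff_left)
    then show ?thesis unfolding span_breakdown_eq by (blast intro: span_base)
  qed
  moreover have "span (insert v S') \<subseteq> S"
    using assms(1,2) by (intro span_minimal) (auto simp: S'_def)
  ultimately show "span (insert v S') = S" by blast
qed

lemma symmetric_matrix_orthonormal_eigenbasis_subspace:
  fixes M :: "real^'n^'n"
  assumes sym: "transpose M = M"
  shows "subspace S \<Longrightarrow> (\<And>x. x \<in> S \<Longrightarrow> M *v x \<in> S) \<Longrightarrow>
    \<exists>B. B \<subseteq> S \<and> pairwise orthogonal B \<and> (\<forall>x\<in>B. norm x = 1 \<and> (\<exists>l. M *v x = l *\<^sub>R x)) \<and> span B = S"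
proof (induction "dim S" arbitrary: S rule: less_induct)
  case less
  show ?case
  proof (cases "S = {0}")
    case True
    then show ?thesis by (intro exI[of _ "{}"]) auto
  next
    case False
    then obtain v l where v: "v \<in> S" "norm v = 1" "M *v v = l *\<^sub>R v"
      using symmetric_matrix_eigenvector_in_subspace[OF sym less.prems] by blast
    define S' where "S' = {x \<in> S. orthogonal x v}"
    have "v \<noteq> 0" using v(2) by auto
    note slice = orthogonal_slice_of_subspace[OF \<open>subspace S\<close> v(1) this, folded S'_def]
    have "M *v x \<in> S'" if "x \<in> S'" for x
      using that less.prems(2) v(3) symmetric_matrix_inner_commute[OF sym, of x v]
      by (auto simp: S'_def orthogonal_def)
    then obtain B where B: "B \<subseteq> S'" "pairwise orthogonal B"
      "\<forall>x\<in>B. norm x = 1 \<and> (\<exists>l. M *v x = l *\<^sub>R x)" "span B = S'"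
      using less.hyps[OF slice(2,1)] by blast
    have "span (insert v B) = S"
      using slice(1,3) by (simp add: span_insert B(4) span_eq_iff[THEN iffD2])
    moreover have "pairwise orthogonal (insert v B)"
      using B(1,2) by (auto simp: pairwise_insert S'_def orthogonal_commute)
    ultimately show ?thesis
      using B v by (intro exI[of _ "insert v B"]) (auto simp: S'_def)
  qed
qed

definition diag_mat :: "('n \<Rightarrow> real) \<Rightarrow> real^'n^'n" where
  "diag_mat l = (\<chi> i j. if i = j then l i else 0)"

lemma det_diag_mat: "det (diag_mat l) = prod l UNIV"
  by (subst det_diagonal) (auto simp: diag_mat_def)

lemma symmetric_matrix_diagonalization:
  fixes M :: "real^'n^'n"
  assumes "transpose M = M"
  obtains Q l where "orthogonal_matrix Q" "M = Q ** diag_mat l ** transpose Q"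
proof -
  obtain B where B: "pairwise orthogonal B" "\<And>x. x \<in> B \<Longrightarrow> norm x = 1"
      "\<And>x. x \<in> B \<Longrightarrow> \<exists>l. M *v x = l *\<^sub>R x" "span B = UNIV"
    using symmetric_matrix_orthonormal_eigenbasis_subspace[OF assms, of UNIV] by auto
  then have "independent B" by (metis norm_zero pairwise_orthogonal_independent zero_neq_one)
  then have "card B = CARD('n)"
    using B(4) dim_span_eq_card_independent[of B] by simp
  then obtain b where b: "bij_betw b (UNIV :: 'n set) B"
    by (metis \<open>independent B\<close> finiteI_independent finite_class.finite_UNIV finite_same_card_bij)
  then have bB: "b j \<in> B" for j by (auto simp: bij_betw_def)
  define Q :: "real^'n^'n" where "Q = (\<chi> i j. b j $ i)"
  obtain l where l: "\<And>j. M *v b j = l j *\<^sub>R b j" using B(3)[OF bB] by metis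
  have "orthogonal_matrix Q"
    using B(1,2) bB b unfolding orthogonal_matrix_orthonormal_columns
    by (auto simp: Q_def column_def pairwise_def bij_betw_def inj_on_def) blast
  moreover have "M ** Q = Q ** diag_mat l"
    using l by (simp add: Q_def diag_mat_def matrix_matrix_mult_def matrix_vector_mult_def
        vec_eq_iff if_distrib cong: if_cong)
  then have "M = Q ** diag_mat l ** transpose Q"
    using \<open>orthogonal_matrix Q\<close> by (metis matrix_mul_assoc matrix_mul_rid orthogonal_matrix_def)
  ultimately show thesis by (rule that)
qed

section \<open>Positive definite matrices\<close>

lemma det_orthogonal_conjugate:
  fixes Q A :: "real^'n^'n"
  assumes "orthogonal_matrix Q"
  shows "det (Q ** A ** transpose Q) = det A"
proof -
  have "det Q * det (transpose Q) = 1"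
    using assms by (metis det_I det_mul orthogonal_matrix_def)
  then show ?thesis by (simp add: det_mul)
qed

lemma spd_diagonalization:
  fixes N :: "real^'n^'n"
  assumes "spd N"
  obtains Q l where "orthogonal_matrix Q" "N = Q ** diag_mat l ** transpose Q" "\<And>j. 0 < l j"
proof -
  obtain Q l where Q: "orthogonal_matrix Q" and N: "N = Q ** diag_mat l ** transpose Q"
    using symmetric_matrix_diagonalization assms unfolding spd_def by blast
  have "0 < l j" for j
  proof -
    define x where "x = Q *v axis j 1"
    have QTx: "transpose Q *v x = axis j 1"
      using Q by (simp add: x_def matrix_vector_mul_assoc orthogonal_matrix_def)
    then have "x \<noteq> 0" by auto
    have "diag_mat l *v axis j 1 = l j *\<^sub>R axis j 1"
      unfolding matrix_vector_mult_basis by (simp add: column_def diag_mat_def axis_def vec_eq_iff)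
    then have "N *v x = l j *\<^sub>R x"
      using QTx by (simp add: N x_def matrix_vector_mult_scaleR flip: matrix_vector_mul_assoc)
    then have "0 < l j * (x \<bullet> x)" using assms \<open>x \<noteq> 0\<close> unfolding spd_def by auto
    then show ?thesis using inner_ge_zero[of x] by (auto simp: zero_less_mult_iff)
  qed
  with Q N show thesis by (rule that)
qed

lemma spd_det_pos:
  fixes N :: "real^'n^'n"
  assumes "spd N"
  shows "0 < det N"
proof -
  obtain Q l where "orthogonal_matrix Q" "N = Q ** diag_mat l ** transpose Q" "\<And>j. 0 < l j"
    using spd_diagonalization assms by blast
  then show ?thesis by (simp add: det_orthogonal_conjugate det_diag_mat prod_pos)
qed

lemma matrix_inv_right: "invertible A \<Longrightarrow> A ** matrix_inv A = mat 1"
  and matrix_inv_left: "invertible A \<Longrightarrow> matrix_inv A ** A = mat 1"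
  unfolding invertible_def matrix_inv_def by (metis (mono_tags, lifting) someI_ex)+

lemma spd_invertible:
  fixes A :: "real^'n^'n"
  assumes "spd A"
  shows "invertible A"
proof -
  have "x = 0" if "A *v x = 0" for x
    using assms that unfolding spd_def by force
  then show ?thesis
    using matrix_left_invertible_ker invertible_left_inverse by blast
qed

lemma spd_congruence:
  fixes A B :: "real^'n^'n"
  assumes "spd A" "invertible B"
  shows "spd (transpose B ** A ** B)"
proof -
  have "x \<bullet> ((transpose B ** A ** B) *v x) = (B *v x) \<bullet> (A *v (B *v x))" for x
    by (metis dot_lmul_matrix inner_commute matrix_vector_mul_assoc transpose_matrix_vector)
  moreover have "B *v x \<noteq> 0" if "x \<noteq> 0" for x
    using that inj_matrix_vector_mult[OF assms(2)] by (metis injD matrix_vector_mult_0_right)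
  ultimately show ?thesis
    using assms(1) by (auto simp: spd_def matrix_transpose_mul matrix_mul_assoc)
qed

lemma spd_matrix_inv:
  fixes A :: "real^'n^'n"
  assumes "spd A"
  shows "spd (matrix_inv A)"
proof -
  note inv = matrix_inv_right[OF spd_invertible[OF assms]] matrix_inv_left[OF spd_invertible[OF assms]]
  have "transpose (matrix_inv A) ** A = mat 1"
    using assms arg_cong[OF inv(1), of transpose] by (simp add: spd_def matrix_transpose_mul)
  then have "transpose (matrix_inv A) ** A ** matrix_inv A = matrix_inv A" by simp
  moreover have "invertible (matrix_inv A)" using inv invertible_def by blast
  ultimately show ?thesis using spd_congruence[OF assms] by metis
qed

lemma matrix_inv_sandwich_eq_mat_1_iff:
  fixes L S :: "real^'n^'n"
  assumes "invertible L" "invertible S"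
  shows "L ** matrix_inv S ** L = mat 1 \<longleftrightarrow> S = L ** L"
proof
  assume "L ** matrix_inv S ** L = mat 1"
  then have "matrix_inv S ** (L ** L) = mat 1"
    by (metis matrix_left_right_inverse matrix_mul_assoc)
  then show "S = L ** L"
    using matrix_inv_right[OF assms(2)] by (metis matrix_mul_assoc matrix_mul_lid matrix_mul_rid)
next
  assume "S = L ** L"
  then have "L ** (L ** matrix_inv S) = mat 1"
    using matrix_inv_right[OF assms(2)] by (simp add: matrix_mul_assoc)
  then show "L ** matrix_inv S ** L = mat 1"
    by (metis matrix_left_right_inverse)
qed

lemma spd_matrix_inv_sandwich:
  fixes \<Lambda> \<Sigma> :: "real^'n^'n"
  assumes "spd \<Lambda>" "spd \<Sigma>"
  shows "spd (\<Lambda> ** matrix_inv \<Sigma> ** \<Lambda>)"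
  using spd_congruence[OF spd_matrix_inv[OF assms(2)] spd_invertible[OF assms(1)]] assms(1)
  by (simp add: spd_def)

section \<open>A determinant inequality\<close>

lemma powr_le_tangent_at_1:
  fixes r t :: real
  assumes "0 < r" "r < 1" "0 < t"
  shows "t powr r \<le> 1 + r * (t - 1)"
  using Youngs_inequality_0[of r "1 - r" t 1] assms by (simp add: algebra_simps)

lemma powr_less_tangent_at_1:
  fixes r t :: real
  assumes "0 < r" "r < 1" "0 < t" "t \<noteq> 1"
  shows "t powr r < 1 + r * (t - 1)"
proof -
  \<comment> \<open>squaring the bound for \<open>sqrt t\<close> gains the term \<open>r (1 - r) (sqrt t - 1)^2\<close>\<close>
  define u where "u = sqrt t"
  have "0 < u" "u \<noteq> 1" "t = u\<^sup>2" using assms by (auto simp: u_def)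
  have "t powr r = (u powr r)\<^sup>2"
    using \<open>0 < u\<close> by (simp add: \<open>t = u\<^sup>2\<close> power2_eq_square powr_mult)
  also have "\<dots> \<le> (1 + r * (u - 1))\<^sup>2"
    using powr_le_tangent_at_1[OF assms(1,2) \<open>0 < u\<close>] by (simp add: power_mono)
  also have "\<dots> = 1 + r * (t - 1) - r * (1 - r) * (u - 1)\<^sup>2"
    by (simp add: \<open>t = u\<^sup>2\<close> power2_eq_square algebra_simps)
  also have "\<dots> < 1 + r * (t - 1)"
    using assms(1,2) \<open>u \<noteq> 1\<close> by simp
  finally show ?thesis .
qed

lemma one_plus_mult_ge_powr:
  fixes \<alpha> t :: real
  assumes "0 < \<alpha>" "0 < t"
  shows "(1 + \<alpha>) * t powr (\<alpha> / (1 + \<alpha>)) \<le> 1 + \<alpha> * t"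
    and "t \<noteq> 1 \<Longrightarrow> (1 + \<alpha>) * t powr (\<alpha> / (1 + \<alpha>)) < 1 + \<alpha> * t"
proof -
  have r: "0 < \<alpha> / (1 + \<alpha>)" "\<alpha> / (1 + \<alpha>) < 1" using assms(1) by simp_all
  have tangent: "(1 + \<alpha>) * (1 + \<alpha> / (1 + \<alpha>) * (t - 1)) = 1 + \<alpha> * t"
    using assms(1) by (simp add: field_simps)
  show "(1 + \<alpha>) * t powr (\<alpha> / (1 + \<alpha>)) \<le> 1 + \<alpha> * t"
    using powr_le_tangent_at_1[OF r assms(2)] assms(1) by (simp flip: tangent)
  show "(1 + \<alpha>) * t powr (\<alpha> / (1 + \<alpha>)) < 1 + \<alpha> * t" if "t \<noteq> 1"
    using powr_less_tangent_at_1[OF r assms(2) that] assms(1) by (simp flip: tangent)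
qed

lemma matrix_add_rdistrib: "(A + B) ** C = A ** C + B ** (C :: 'a::semiring_1^'p^'n)"
  by (vector matrix_matrix_mult_def sum.distrib[symmetric] field_simps)

lemma spd_det_one_plus_mult_ge:
  fixes N :: "real^'n^'n" and \<alpha> :: real
  assumes "0 < \<alpha>" "spd N"
  shows "(1 + \<alpha>) ^ CARD('n) * det N powr (\<alpha> / (1 + \<alpha>)) \<le> det (mat 1 + \<alpha> *\<^sub>R N)"
    and "N \<noteq> mat 1 \<Longrightarrow>
      (1 + \<alpha>) ^ CARD('n) * det N powr (\<alpha> / (1 + \<alpha>)) < det (mat 1 + \<alpha> *\<^sub>R N)"
proof -
  obtain Q l where Q: "orthogonal_matrix Q" and N: "N = Q ** diag_mat l ** transpose Q"
    and l: "\<And>j. 0 < l j"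
    using spd_diagonalization assms(2) by blast
  have "mat 1 + \<alpha> *\<^sub>R N = Q ** (mat 1 + \<alpha> *\<^sub>R diag_mat l) ** transpose Q"
    using Q by (simp add: N orthogonal_matrix_def matrix_add_ldistrib matrix_add_rdistrib
        matrix_scalar_ac scalar_matrix_assoc matrix_mul_assoc)
  also have "mat 1 + \<alpha> *\<^sub>R diag_mat l = diag_mat (\<lambda>j. 1 + \<alpha> * l j)"
    by (simp add: diag_mat_def mat_def vec_eq_iff)
  finally have det_lhs: "det (mat 1 + \<alpha> *\<^sub>R N) = (\<Prod>j\<in>UNIV. 1 + \<alpha> * l j)"
    using Q by (simp add: det_orthogonal_conjugate det_diag_mat)
  have det_rhs: "(1 + \<alpha>) ^ CARD('n) * det N powr (\<alpha> / (1 + \<alpha>))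
      = (\<Prod>j\<in>UNIV. (1 + \<alpha>) * l j powr (\<alpha> / (1 + \<alpha>)))"
    using Q by (simp add: N det_orthogonal_conjugate det_diag_mat prod.distrib prod_powr_distrib)
  note factor = one_plus_mult_ge_powr[OF assms(1) l]
  show "(1 + \<alpha>) ^ CARD('n) * det N powr (\<alpha> / (1 + \<alpha>)) \<le> det (mat 1 + \<alpha> *\<^sub>R N)"
    unfolding det_lhs det_rhs using factor(1) assms(1) by (intro prod_mono) simp
  assume "N \<noteq> mat 1"
  then have "diag_mat l \<noteq> mat 1" using Q by (auto simp: N orthogonal_matrix_def)
  then obtain j where "l j \<noteq> 1" by (auto simp: diag_mat_def mat_def vec_eq_iff split: if_splits)
  show "(1 + \<alpha>) ^ CARD('n) * det N powr (\<alpha> / (1 + \<alpha>)) < det (mat 1 + \<alpha> *\<^sub>R N)"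
    unfolding det_lhs det_rhs using factor assms(1) l \<open>l j \<noteq> 1\<close>
    by (intro prod_mono_strict[of j]) (auto intro: add_pos_pos)
qed

definition Phi :: "real \<Rightarrow> real^'n^'n \<Rightarrow> real" where
  "Phi \<alpha> N = det N powr (\<alpha> / 2) *
     (1 / (1 + \<alpha>) powr (real CARD('n) / 2) - (1 + 1 / \<alpha>) * det (mat 1 + \<alpha> *\<^sub>R N) powr (- 1 / 2))"

lemma Psi_eq_Phi:
  fixes \<Lambda> \<Sigma> :: "real^'n^'n"
  assumes "spd \<Lambda>" "spd \<Sigma>"
  shows "Psi \<alpha> \<Lambda> \<Sigma> = det (\<Lambda> ** \<Lambda>) powr (- \<alpha> / 2) * Phi \<alpha> (\<Lambda> ** matrix_inv \<Sigma> ** \<Lambda>)"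
proof -
  define N where "N = \<Lambda> ** matrix_inv \<Sigma> ** \<Lambda>"
  have "spd N" using spd_matrix_inv_sandwich[OF assms] by (simp add: N_def)
  have "det (matrix_inv \<Sigma>) * det \<Sigma> = 1"
    using matrix_inv_left[OF spd_invertible[OF assms(2)]] by (metis det_I det_mul)
  then have "det N * det \<Sigma> = det (\<Lambda> ** \<Lambda>)"
    by (simp add: N_def det_mul)
  then have "det \<Sigma> = det (\<Lambda> ** \<Lambda>) / det N"
    using spd_det_pos[OF \<open>spd N\<close>] by (simp add: field_simps)
  then have "det \<Sigma> powr (- \<alpha> / 2) = det (\<Lambda> ** \<Lambda>) powr (- \<alpha> / 2) / det N powr (- \<alpha> / 2)"
    by (simp only: powr_divide)
  also have "det N powr (- \<alpha> / 2) = 1 / det N powr (\<alpha> / 2)"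
    by (simp add: powr_minus_divide flip: minus_divide_left)
  finally have "det \<Sigma> powr (- \<alpha> / 2) = det (\<Lambda> ** \<Lambda>) powr (- \<alpha> / 2) * det N powr (\<alpha> / 2)"
    by simp
  then show ?thesis unfolding Psi_def Phi_def N_def[symmetric] by (simp add: algebra_simps)
qed

text \<open>\<open>x\<close>, \<open>Y\<close> and \<open>a\<close> stand for \<open>|N|\<close>, \<open>|I + \<alpha>N|\<close> and \<open>(1+\<alpha>)^(d/2)\<close>.\<close>

lemma Phi_lower_bound_scalar:
  fixes \<alpha> a x Y :: real
  assumes "0 < \<alpha>" "0 < a" "0 < x" and Y: "a\<^sup>2 * x powr (\<alpha> / (1 + \<alpha>)) \<le> Y"
  shows "- 1 / (\<alpha> * a) \<le> x powr (\<alpha> / 2) * (1 / a - (1 + 1 / \<alpha>) * Y powr (- 1 / 2))"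
    and "a\<^sup>2 * x powr (\<alpha> / (1 + \<alpha>)) < Y \<Longrightarrow>
      - 1 / (\<alpha> * a) < x powr (\<alpha> / 2) * (1 / a - (1 + 1 / \<alpha>) * Y powr (- 1 / 2))"
proof -
  define \<beta> where "\<beta> = \<alpha> / (1 + \<alpha>)"
  define p where "p = x powr (\<alpha> / 2)"
  define g where "g Y = p * (1 / a - (1 + 1 / \<alpha>) * Y powr (- 1 / 2))" for Y
  define Y0 where "Y0 = a\<^sup>2 * x powr \<beta>"
  have "0 < p" "0 < Y0" using assms by (simp_all add: p_def Y0_def)
  have "(a\<^sup>2) powr (- 1 / 2) = 1 / a"
    using assms(2) by (simp add: powr_powr powr_minus_divide flip: powr_numeral)
  then have "Y0 powr (- 1 / 2) = x powr (- \<beta> / 2) / a"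
    by (simp add: Y0_def powr_mult powr_powr)
  moreover have "p * x powr (- \<beta> / 2) = p powr \<beta>"
  proof -
    have "\<alpha> / 2 + - \<beta> / 2 = \<alpha> / 2 * \<beta>"
      using assms(1) by (simp add: \<beta>_def field_simps)
    then show ?thesis by (metis p_def powr_add powr_powr)
  qed
  ultimately have "g Y0 = (p - (1 + 1 / \<alpha>) * p powr \<beta>) / a"
    using assms(2) by (simp add: g_def field_simps)
  moreover have "- 1 / \<alpha> \<le> p - (1 + 1 / \<alpha>) * p powr \<beta>"
  proof -
    have "(1 + 1 / \<alpha>) * p powr \<beta> = (1 + \<alpha>) * p powr \<beta> / \<alpha>"
      using assms(1) by (simp add: field_simps)
    also have "\<dots> \<le> (1 + \<alpha> * p) / \<alpha>"
      using one_plus_mult_ge_powr(1)[OF assms(1) \<open>0 < p\<close>] assms(1)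
      by (simp add: \<beta>_def divide_right_mono)
    also have "\<dots> = 1 / \<alpha> + p" using assms(1) by (simp add: field_simps)
    finally show ?thesis by simp
  qed
  ultimately have base: "- 1 / (\<alpha> * a) \<le> g Y0"
    using assms(2) divide_right_mono[of "- 1 / \<alpha>" _ a] by simp
  have coeff: "0 < p * (1 + 1 / \<alpha>)" using \<open>0 < p\<close> assms(1) by (simp add: add_pos_pos)
  show "- 1 / (\<alpha> * a) \<le> g Y"
  proof -
    have decr: "Y powr (- 1 / 2) \<le> Y0 powr (- 1 / 2)"
      using powr_mono2'[of "- 1 / 2" Y0 Y] \<open>0 < Y0\<close> Y by (simp add: Y0_def \<beta>_def)
    have "g Y0 \<le> g Y"
      using mult_left_mono[OF decr less_imp_le[OF coeff]] by (simp add: g_def algebra_simps)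
    then show ?thesis using base by linarith
  qed
  show "- 1 / (\<alpha> * a) < g Y" if "a\<^sup>2 * x powr (\<alpha> / (1 + \<alpha>)) < Y"
  proof -
    have decr: "Y powr (- 1 / 2) < Y0 powr (- 1 / 2)"
      using powr_less_mono2_neg[of "- 1 / 2" Y0 Y] \<open>0 < Y0\<close> that by (simp add: Y0_def \<beta>_def)
    have "g Y0 < g Y"
      using mult_strict_left_mono[OF decr coeff] by (simp add: g_def algebra_simps)
    then show ?thesis using base by linarith
  qed
qed

lemma Phi_ge_Phi_mat_1:
  fixes N :: "real^'n^'n"
  assumes "0 < \<alpha>" "spd N"
  shows "Phi \<alpha> (mat 1 :: real^'n^'n) \<le> Phi \<alpha> N"
    and "N \<noteq> mat 1 \<Longrightarrow> Phi \<alpha> (mat 1 :: real^'n^'n) < Phi \<alpha> N"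
proof -
  define a where "a = (1 + \<alpha>) powr (real CARD('n) / 2)"
  have "0 < a" using assms(1) by (simp add: a_def)
  have a2: "a\<^sup>2 = (1 + \<alpha>) ^ CARD('n)"
    using assms(1) by (simp add: a_def powr_powr powr_realpow flip: powr_numeral)
  have "mat 1 + \<alpha> *\<^sub>R mat 1 = (diag_mat (\<lambda>_. 1 + \<alpha>) :: real^'n^'n)"
    by (simp add: diag_mat_def mat_def vec_eq_iff)
  then have "det (mat 1 + \<alpha> *\<^sub>R mat 1 :: real^'n^'n) powr (- 1 / 2) = 1 / a"
    using \<open>0 < a\<close> by (simp add: det_diag_mat flip: a2) (simp add: powr_powr powr_minus_divide flip: powr_numeral)
  then have Phi_mat_1: "Phi \<alpha> (mat 1 :: real^'n^'n) = - 1 / (\<alpha> * a)"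
    using assms(1) \<open>0 < a\<close> by (simp add: Phi_def a_def field_simps)
  have Phi_N: "Phi \<alpha> N = det N powr (\<alpha> / 2) * (1 / a - (1 + 1 / \<alpha>) * det (mat 1 + \<alpha> *\<^sub>R N) powr (- 1 / 2))"
    by (simp add: Phi_def a_def)
  note bound = spd_det_one_plus_mult_ge[OF assms, folded a2]
  note aux = Phi_lower_bound_scalar[OF assms(1) \<open>0 < a\<close> spd_det_pos[OF assms(2)] bound(1)]
  show "Phi \<alpha> (mat 1 :: real^'n^'n) \<le> Phi \<alpha> N"
    unfolding Phi_mat_1 Phi_N by (rule aux(1))
  show "Phi \<alpha> (mat 1 :: real^'n^'n) < Phi \<alpha> N" if "N \<noteq> mat 1"
    unfolding Phi_mat_1 Phi_N by (rule aux(2)[OF bound(2)[OF that]])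
qed

lemma Psi_ge_Psi_square:
  fixes \<Lambda> \<Sigma> :: "real^'n^'n"
  assumes "0 < \<alpha>" "spd \<Lambda>" "spd \<Sigma>"
  shows "Psi \<alpha> \<Lambda> (\<Lambda> ** \<Lambda>) \<le> Psi \<alpha> \<Lambda> \<Sigma>"
    and "\<Sigma> \<noteq> \<Lambda> ** \<Lambda> \<Longrightarrow> Psi \<alpha> \<Lambda> (\<Lambda> ** \<Lambda>) < Psi \<alpha> \<Lambda> \<Sigma>"
proof -
  define N where "N = \<Lambda> ** matrix_inv \<Sigma> ** \<Lambda>"
  define c where "c = det (\<Lambda> ** \<Lambda>) powr (- \<alpha> / 2)"
  have "spd (\<Lambda> ** \<Lambda>)"
    using spd_congruence[of "mat 1" \<Lambda>] spd_invertible[OF assms(2)] assms(2)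
    by (simp add: spd_def)
  then have "0 < c" using spd_det_pos[of "\<Lambda> ** \<Lambda>"] by (simp add: c_def)
  have "Psi \<alpha> \<Lambda> (\<Lambda> ** \<Lambda>) = c * Phi \<alpha> (mat 1 :: real^'n^'n)"
  proof -
    have "\<Lambda> ** matrix_inv (\<Lambda> ** \<Lambda>) ** \<Lambda> = mat 1"
      using matrix_inv_sandwich_eq_mat_1_iff spd_invertible assms(2) \<open>spd (\<Lambda> ** \<Lambda>)\<close> by blast
    then show ?thesis using Psi_eq_Phi[OF assms(2) \<open>spd (\<Lambda> ** \<Lambda>)\<close>] by (simp add: c_def)
  qed
  moreover have "Psi \<alpha> \<Lambda> \<Sigma> = c * Phi \<alpha> N"
    using Psi_eq_Phi[OF assms(2,3)] by (simp add: c_def N_def)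
  moreover have "spd N" using spd_matrix_inv_sandwich[OF assms(2,3)] by (simp add: N_def)
  ultimately show "Psi \<alpha> \<Lambda> (\<Lambda> ** \<Lambda>) \<le> Psi \<alpha> \<Lambda> \<Sigma>"
    using Phi_ge_Phi_mat_1(1)[OF assms(1)] \<open>0 < c\<close> by (simp add: mult_left_mono)
  assume "\<Sigma> \<noteq> \<Lambda> ** \<Lambda>"
  then have "N \<noteq> mat 1"
    unfolding N_def
    using matrix_inv_sandwich_eq_mat_1_iff[OF spd_invertible[OF assms(2)] spd_invertible[OF assms(3)]]
    by blast
  with \<open>spd N\<close> \<open>0 < c\<close> show "Psi \<alpha> \<Lambda> (\<Lambda> ** \<Lambda>) < Psi \<alpha> \<Lambda> \<Sigma>"
    using Phi_ge_Phi_mat_1(2)[OF assms(1)] \<open>Psi \<alpha> \<Lambda> \<Sigma> = c * Phi \<alpha> N\<close>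
      \<open>Psi \<alpha> \<Lambda> (\<Lambda> ** \<Lambda>) = c * Phi \<alpha> (mat 1 :: real^'n^'n)\<close> by simp
qed

theorem lemma7:
  fixes \<alpha> :: real and \<Sigma>0 \<Lambda>0 :: "real^'n^'n"
  assumes "\<alpha> > 0"
    and "spd \<Sigma>0"
    and "spd \<Lambda>0"
    and "\<Lambda>0 ** \<Lambda>0 = \<Sigma>0"
  shows "(\<forall>\<Sigma>. spd \<Sigma> \<longrightarrow> Psi \<alpha> \<Lambda>0 \<Sigma>0 \<le> Psi \<alpha> \<Lambda>0 \<Sigma>)
       \<and> (\<forall>S. spd S \<and> (\<forall>\<Sigma>. spd \<Sigma> \<longrightarrow> Psi \<alpha> \<Lambda>0 S \<le> Psi \<alpha> \<Lambda>0 \<Sigma>) \<longrightarrow> S = \<Sigma>0)"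
proof (intro conjI allI impI)
  fix \<Sigma> :: "real^'n^'n"
  assume "spd \<Sigma>"
  then show "Psi \<alpha> \<Lambda>0 \<Sigma>0 \<le> Psi \<alpha> \<Lambda>0 \<Sigma>"
    using Psi_ge_Psi_square(1)[OF assms(1,3)] assms(4) by blast
next
  fix S :: "real^'n^'n"
  assume S: "spd S \<and> (\<forall>\<Sigma>. spd \<Sigma> \<longrightarrow> Psi \<alpha> \<Lambda>0 S \<le> Psi \<alpha> \<Lambda>0 \<Sigma>)"
  then have "Psi \<alpha> \<Lambda>0 S \<le> Psi \<alpha> \<Lambda>0 \<Sigma>0" using assms(2) by blast
  then show "S = \<Sigma>0"
    using Psi_ge_Psi_square(2)[OF assms(1,3)] S assms(4) by force
qed

end
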